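(* Let $0\le\alpha\le\beta\le\pi/2$, $P_1,P_2>0$, and define $\mathcal R(\theta)$ as in the context. Then the maximum of $R_1$ over $\bigcup_{\theta\in[\alpha,\beta]}\mathcal R(\theta)$ equals $\mathcal C(\phi_1(\alpha))$ and the maximum of $R_2$ over this set equals $\mathcal C(\phi_2(\beta))$.
   Context: $\mathcal C(x)=\frac12\log_2(1+x)$, $\phi_1(\theta)=P_1\cos^2(\theta-\alpha)$, $\phi_2(\theta)=P_2\cos^2(\theta-\beta)$, $\phi=\phi_1+\phi_2$, and $\mathcal R(\theta)=\{(R_1,R_2)\ge0:R_1\le\mathcal C(\phi_1(\theta)),R_2\le\mathcal C(\phi_2(\theta)),R_1+R_2\le\mathcal C(\phi(\theta))\}$. (In the two-hop MAC, $P_i=\|\mathbf h_{0i}\|^2P_{S_i}$ and $\bigcup_{\theta\in[\alpha,\beta]}\mathcal R(\theta)$ is the first outer bound.) *)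

theory Defs
  imports "HOL-Analysis.Analysis"
begin

definition capC :: "real \<Rightarrow> real" where
  "capC x = (1/2) * log 2 (1 + x)"

definition phi1 :: "real \<Rightarrow> real \<Rightarrow> real \<Rightarrow> real" where
  "phi1 P1 \<alpha> \<theta> = P1 * (cos (\<theta> - \<alpha>))^2"

definition phi2 :: "real \<Rightarrow> real \<Rightarrow> real \<Rightarrow> real" where
  "phi2 P2 \<beta> \<theta> = P2 * (cos (\<theta> - \<beta>))^2"

definition phi :: "real \<Rightarrow> real \<Rightarrow> real \<Rightarrow> real \<Rightarrow> real \<Rightarrow> real" where
  "phi P1 P2 \<alpha> \<beta> \<theta> = phi1 P1 \<alpha> \<theta> + phi2 P2 \<beta> \<theta>"

definition rateRegion :: "real \<Rightarrow> real \<Rightarrow> real \<Rightarrow> real \<Rightarrow> real \<Rightarrow> (real \<times> real) set" where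
  "rateRegion P1 P2 \<alpha> \<beta> \<theta> =
     {(R1, R2). R1 \<ge> 0 \<and> R2 \<ge> 0 \<and>
        R1 \<le> capC (phi1 P1 \<alpha> \<theta>) \<and> R2 \<le> capC (phi2 P2 \<beta> \<theta>) \<and>
        R1 + R2 \<le> capC (phi P1 P2 \<alpha> \<beta> \<theta>)}"

end

theory Submission
  imports Defs
begin

text \<open>Each pentagon \<open>rateRegion \<theta>\<close> lies in the box
  \<open>[0, capC (phi1 \<theta>)] \<times> [0, capC (phi2 \<theta>)]\<close> and contains both corners of that box on the
  axes, because the sum constraint is slack there. Since \<open>phi1 \<theta> \<le> P1 = phi1 \<alpha>\<close> and
  \<open>phi2 \<theta> \<le> P2 = phi2 \<beta>\<close>, the largest single rates over the union are attained at
  \<open>\<theta> = \<alpha>\<close> and \<open>\<theta> = \<beta>\<close> respectively.\<close>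

lemma capC_mono: "0 \<le> x \<Longrightarrow> x \<le> y \<Longrightarrow> capC x \<le> capC y"
  unfolding capC_def by (simp add: log_le_cancel_iff)

lemma capC_nonneg: "0 \<le> x \<Longrightarrow> 0 \<le> capC x"
  unfolding capC_def by simp

lemma phi1_nonneg: "0 \<le> P1 \<Longrightarrow> 0 \<le> phi1 P1 \<alpha> \<theta>"
  by (simp add: phi1_def)

lemma phi2_nonneg: "0 \<le> P2 \<Longrightarrow> 0 \<le> phi2 P2 \<beta> \<theta>"
  by (simp add: phi2_def)

lemma phi1_le: "0 \<le> P1 \<Longrightarrow> phi1 P1 \<alpha> \<theta> \<le> P1"
  by (simp add: phi1_def abs_square_le_1 mult_left_le)

lemma phi2_le: "0 \<le> P2 \<Longrightarrow> phi2 P2 \<beta> \<theta> \<le> P2"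
  by (simp add: phi2_def abs_square_le_1 mult_left_le)

lemma phi1_at_alpha [simp]: "phi1 P1 \<alpha> \<alpha> = P1"
  by (simp add: phi1_def)

lemma phi2_at_beta [simp]: "phi2 P2 \<beta> \<beta> = P2"
  by (simp add: phi2_def)

lemma rateRegion_fst_le:
  assumes "r \<in> rateRegion P1 P2 \<alpha> \<beta> \<theta>" "0 \<le> P1"
  shows "fst r \<le> capC P1"
proof -
  have "fst r \<le> capC (phi1 P1 \<alpha> \<theta>)"
    using assms(1) by (auto simp: rateRegion_def)
  also have "\<dots> \<le> capC P1"
    using assms(2) by (intro capC_mono phi1_nonneg phi1_le)
  finally show ?thesis .
qed

lemma rateRegion_snd_le:
  assumes "r \<in> rateRegion P1 P2 \<alpha> \<beta> \<theta>" "0 \<le> P2"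
  shows "snd r \<le> capC P2"
proof -
  have "snd r \<le> capC (phi2 P2 \<beta> \<theta>)"
    using assms(1) by (auto simp: rateRegion_def)
  also have "\<dots> \<le> capC P2"
    using assms(2) by (intro capC_mono phi2_nonneg phi2_le)
  finally show ?thesis .
qed

lemma rateRegion_corner1:
  assumes "0 \<le> P1" "0 \<le> P2"
  shows "(capC (phi1 P1 \<alpha> \<theta>), 0) \<in> rateRegion P1 P2 \<alpha> \<beta> \<theta>"
proof -
  have "capC (phi1 P1 \<alpha> \<theta>) \<le> capC (phi P1 P2 \<alpha> \<beta> \<theta>)"
    using assms by (intro capC_mono) (simp_all add: phi_def phi1_nonneg phi2_nonneg)
  then show ?thesis
    using assms by (simp add: rateRegion_def capC_nonneg phi1_nonneg phi2_nonneg)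
qed

lemma rateRegion_corner2:
  assumes "0 \<le> P1" "0 \<le> P2"
  shows "(0, capC (phi2 P2 \<beta> \<theta>)) \<in> rateRegion P1 P2 \<alpha> \<beta> \<theta>"
proof -
  have "capC (phi2 P2 \<beta> \<theta>) \<le> capC (phi P1 P2 \<alpha> \<beta> \<theta>)"
    using assms by (intro capC_mono) (simp_all add: phi_def phi1_nonneg phi2_nonneg)
  then show ?thesis
    using assms by (simp add: rateRegion_def capC_nonneg phi1_nonneg phi2_nonneg)
qed

theorem lemma6:
  fixes \<alpha> \<beta> P1 P2 :: real
  assumes "0 \<le> \<alpha>" "\<alpha> \<le> \<beta>" "\<beta> \<le> pi / 2" "P1 > 0" "P2 > 0"
  shows "capC (phi1 P1 \<alpha> \<alpha>) \<in> fst ` (\<Union>\<theta>\<in>{\<alpha>..\<beta>}. rateRegion P1 P2 \<alpha> \<beta> \<theta>)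
       \<and> (\<forall>r \<in> (\<Union>\<theta>\<in>{\<alpha>..\<beta>}. rateRegion P1 P2 \<alpha> \<beta> \<theta>). fst r \<le> capC (phi1 P1 \<alpha> \<alpha>))
       \<and> capC (phi2 P2 \<beta> \<beta>) \<in> snd ` (\<Union>\<theta>\<in>{\<alpha>..\<beta>}. rateRegion P1 P2 \<alpha> \<beta> \<theta>)
       \<and> (\<forall>r \<in> (\<Union>\<theta>\<in>{\<alpha>..\<beta>}. rateRegion P1 P2 \<alpha> \<beta> \<theta>). snd r \<le> capC (phi2 P2 \<beta> \<beta>))"
proof (intro conjI ballI)
  have P: "0 \<le> P1" "0 \<le> P2" using assms by simp_all
  have "\<alpha> \<in> {\<alpha>..\<beta>}" "\<beta> \<in> {\<alpha>..\<beta>}" using assms by simp_all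
  with rateRegion_corner1[OF P, of \<alpha> \<alpha> \<beta>] rateRegion_corner2[OF P, of \<beta> \<beta> \<alpha>]
  show "capC (phi1 P1 \<alpha> \<alpha>) \<in> fst ` (\<Union>\<theta>\<in>{\<alpha>..\<beta>}. rateRegion P1 P2 \<alpha> \<beta> \<theta>)"
    and "capC (phi2 P2 \<beta> \<beta>) \<in> snd ` (\<Union>\<theta>\<in>{\<alpha>..\<beta>}. rateRegion P1 P2 \<alpha> \<beta> \<theta>)"
    by (force intro: image_eqI)+
  fix r assume "r \<in> (\<Union>\<theta>\<in>{\<alpha>..\<beta>}. rateRegion P1 P2 \<alpha> \<beta> \<theta>)"
  then obtain \<theta> where "r \<in> rateRegion P1 P2 \<alpha> \<beta> \<theta>" by blast
  with P show "fst r \<le> capC (phi1 P1 \<alpha> \<alpha>)" and "snd r \<le> capC (phi2 P2 \<beta> \<beta>)"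
    by (simp_all add: rateRegion_fst_le rateRegion_snd_le)
qed

end
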